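(* Let $n\ge1$. There exist constants $C>0$ and $\delta_0>0$ depending only on $n$ such that for every $0<\delta<\delta_0$ the map $\psi$ is defined on $E_\delta$ and every $\psi(h)$, $h\in E_\delta$, lies within operator-norm distance $C\delta$ of some matrix in $SO(n,\mathbb R)$.
   Context: $|\cdot|$ is the operator norm. $E_\delta=\{gp: g\in{\rm Mat}(n,\mathbb R),\ \det g>0,\ p\in GL(n,\mathbb C),\ |p-I|<\delta\}$. For small $\delta$ and $h\in E_\delta$, all eigenvalues of $hh^T$ have positive real part; let $S=\sqrt{hh^T}$ be the principal square root (holomorphic functional calculus with the branch of $\sqrt\lambda$ on $\{{\rm Re}\,\lambda>0\}$ positive for $\lambda>0$), and define $\psi(h)=S^{-1}h=S(h^T)^{-1}$, the complex orthogonal factor of the polar decomposition $h=S\psi(h)$. *)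

theory Defs
  imports "HOL-Analysis.Analysis"
begin

type_synonym 'n cmat = "complex^'n^'n"

definition opnorm :: "'n::finite cmat \<Rightarrow> real" where
  "opnorm M = onorm (\<lambda>x::complex^'n. M *v x)"

definition cplx :: "real^'n^'n \<Rightarrow> 'n::finite cmat" where
  "cplx g = (\<chi> i j. complex_of_real (g $ i $ j))"

definition cmat_eigenvalue :: "'n::finite cmat \<Rightarrow> complex \<Rightarrow> bool" where
  "cmat_eigenvalue A c \<longleftrightarrow> (\<exists>v. v \<noteq> 0 \<and> A *v v = c *s v)"

definition E_set :: "real \<Rightarrow> 'n::finite cmat set" where
  "E_set \<delta> = {cplx g ** p | g p. det g > 0 \<and> invertible p \<and> opnorm (p - mat 1) < \<delta>}"

text \<open>Principal square root: the unique square root all of whose eigenvalues lie in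
  the open right half-plane (this is what the holomorphic functional calculus with the
  principal branch produces when the spectrum lies in the right half-plane).\<close>
definition psqrt :: "'n::finite cmat \<Rightarrow> 'n cmat" where
  "psqrt A = (THE S. S ** S = A \<and> (\<forall>c. cmat_eigenvalue S c \<longrightarrow> Re c > 0))"

definition psi :: "'n::finite cmat \<Rightarrow> 'n cmat" where
  "psi h = matrix_inv (psqrt (h ** transpose h)) ** h"

definition SO_set :: "(real^'n^'n::finite) set" where
  "SO_set = {Q. transpose Q ** Q = mat 1 \<and> det Q = 1}"

end

theory Submission
  imports Defs "HOL-Computational_Algebra.Fundamental_Theorem_Algebra"
begin

text \<open>Write \<open>h = g p\<close> and take a singular value decomposition \<open>g = U D V\<close> with \<open>U, V\<close>
  orthogonal and \<open>D\<close> positive diagonal. Then \<open>h h\<^sup>T = U D (I + E) D U\<^sup>T\<close> with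
  \<open>I + E = V p p\<^sup>T V\<^sup>T\<close> and \<open>E = O(\<delta>)\<close> symmetric. A contraction argument gives
  \<open>W = I + O(\<delta>)\<close> with \<open>W W\<^sup>T = I + E\<close> and \<open>D W\<close> symmetric, so \<open>S = U D W U\<^sup>T\<close>
  squares to \<open>h h\<^sup>T\<close>. Since \<open>S\<close> is similar to \<open>D\<^sup>1\<^sup>/\<^sup>2 W D\<^sup>1\<^sup>/\<^sup>2\<close>, a real congruence
  of a matrix close to \<open>I\<close>, its eigenvalues have positive real part (and so do those of
  \<open>h h\<^sup>T = g (p p\<^sup>T) g\<^sup>T\<close>). Square roots with spectrum in the right half-plane are
  unique (Sylvester's argument), so \<open>S\<close> is the principal square root and
  \<open>\<psi>(h) = S\<^sup>-\<^sup>1 h = U W\<^sup>-\<^sup>1 V p\<close>, which is \<open>O(\<delta>)\<close>-close to the rotation \<open>U V\<close>.\<close>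

section \<open>Matrix algebra and the Frobenius norm\<close>

lemma matrix_add_rdistrib: "(A + B) ** C = A ** C + B ** (C :: 'a::semiring_1^'p^'n)"
  by (simp add: matrix_matrix_mult_def vec_eq_iff sum.distrib distrib_right)

lemma matrix_diff_ldistrib: "A ** (B - C) = A ** B - A ** (C :: 'a::ring_1^'p^'n)"
  by (simp add: matrix_matrix_mult_def vec_eq_iff sum_subtractf right_diff_distrib)

lemma matrix_diff_rdistrib: "(A - B) ** C = A ** C - B ** (C :: 'a::ring_1^'p^'n)"
  by (simp add: matrix_matrix_mult_def vec_eq_iff sum_subtractf left_diff_distrib)

lemma matrix_minus_right: "A ** (- B) = - (A ** (B :: 'a::ring_1^'p^'n))"
  by (simp add: matrix_matrix_mult_def vec_eq_iff sum_negf)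

lemma transpose_add: "transpose (A + B) = transpose A + transpose B"
  by (simp add: transpose_def vec_eq_iff)

lemma transpose_diff: "transpose (A - B) = transpose A - transpose (B :: 'a::ab_group_add^'n^'m)"
  by (simp add: transpose_def vec_eq_iff)

lemma mat_mult_left: "(mat c ** M) $ i $ j = c * (M $ i $ j :: 'a::semiring_1)"
  by (simp add: matrix_matrix_mult_def mat_def if_distrib if_distribR sum.delta cong: if_cong)

lemma mat_mult_commute: "mat c ** M = M ** (mat c :: 'a::comm_semiring_1^'n^'n)"
  by (simp add: matrix_matrix_mult_def mat_def vec_eq_iff if_distrib if_distribR mult.commute
      sum.delta sum.delta' cong: if_cong)

lemma mat_mult_mat: "mat a ** mat b = (mat (a * b) :: 'a::semiring_1^'n^'n)"
  by (simp add: vec_eq_iff mat_mult_left) (simp add: mat_def)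

lemma mat_add: "mat (a + b) = (mat a + mat b :: 'a::monoid_add^'n^'n)"
  by (simp add: mat_def vec_eq_iff)

lemma matrix_vector_mult_mat: "mat c *v x = c *s (x :: 'a::semiring_1^'n)"
  by (simp add: mat_def matrix_vector_mult_def vec_eq_iff if_distrib if_distribR sum.delta'
      cong: if_cong)

lemma matrix_vector_mult_cmult: "A *v (c *s x) = c *s (A *v x :: 'a::comm_semiring_1^'n)"
  by (simp add: vec_eq_iff matrix_vector_mult_def sum_distrib_left mult_ac)

lemma norm_vec_power2: "(norm x)\<^sup>2 = (\<Sum>i\<in>UNIV. (norm (x $ i))\<^sup>2)"
  for x :: "'a::real_normed_vector^'n"
  unfolding norm_vec_def L2_set_def by (simp add: sum_nonneg)

lemma norm_sum_mult_le:
  fixes a b :: "'i \<Rightarrow> 'a::real_normed_algebra"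
  shows "norm (\<Sum>k\<in>K. a k * b k) \<le> L2_set (\<lambda>k. norm (a k)) K * L2_set (\<lambda>k. norm (b k)) K"
proof -
  have "norm (\<Sum>k\<in>K. a k * b k) \<le> (\<Sum>k\<in>K. \<bar>norm (a k)\<bar> * \<bar>norm (b k)\<bar>)"
    by (rule order_trans[OF norm_sum sum_mono]) (simp add: norm_mult_ineq)
  also have "\<dots> \<le> L2_set (\<lambda>k. norm (a k)) K * L2_set (\<lambda>k. norm (b k)) K"
    by (rule L2_set_mult_ineq)
  finally show ?thesis .
qed

lemma norm_matrix_vector_mult_le: "norm (A *v x) \<le> norm A * norm x"
  for A :: "'a::real_normed_algebra_1^'n^'m"
proof -
  have "norm ((A *v x) $ i) \<le> norm (A $ i) * norm x" for i
    using norm_sum_mult_le[of "\<lambda>k. A $ i $ k" "\<lambda>k. x $ k" UNIV]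
    by (simp add: matrix_vector_mult_def norm_vec_def)
  then have "norm (A *v x) \<le> L2_set (\<lambda>i. norm (A $ i) * norm x) UNIV"
    unfolding norm_vec_def[of "A *v x"] by (intro L2_set_mono) simp_all
  also have "\<dots> = norm A * norm x"
    by (simp add: L2_set_left_distrib norm_vec_def)
  finally show ?thesis .
qed

lemma norm_matrix_columns: "norm M = L2_set (\<lambda>j. norm (column j M)) UNIV"
  for M :: "'a::real_normed_vector^'n^'m"
proof -
  have "(norm M)\<^sup>2 = (L2_set (\<lambda>j. norm (column j M)) UNIV)\<^sup>2"
    by (simp add: norm_vec_power2 L2_set_def sum_nonneg column_def) (rule sum.swap)
  then show ?thesis by (simp add: power2_eq_iff_nonneg)
qed

lemma norm_matrix_mult_le: "norm (A ** B) \<le> norm A * norm B"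
  for A :: "'a::real_normed_algebra_1^'n^'m" and B :: "'a^'p^'n"
proof -
  have "column j (A ** B) = A *v column j B" for j
    by (simp add: column_def matrix_matrix_mult_def matrix_vector_mult_def vec_eq_iff)
  then have "norm (A ** B) \<le> L2_set (\<lambda>j. norm A * norm (column j B)) UNIV"
    unfolding norm_matrix_columns[of "A ** B"]
    by (intro L2_set_mono) (simp_all add: norm_matrix_vector_mult_le)
  also have "\<dots> = norm A * norm B"
    by (simp add: L2_set_right_distrib norm_matrix_columns[of B])
  finally show ?thesis .
qed

lemma norm_transpose: "norm (transpose A) = norm A"
  for A :: "'a::real_normed_vector^'n^'m"
proof -
  have "(norm (transpose A))\<^sup>2 = (norm A)\<^sup>2"
    by (simp add: norm_vec_power2 transpose_def) (rule sum.swap)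
  then show ?thesis by (simp add: power2_eq_iff_nonneg)
qed

lemma norm_mat_1: "norm (mat 1 :: 'a::real_normed_algebra_1^'n^'n) = sqrt CARD('n)"
proof -
  have "(norm (mat 1 :: 'a^'n^'n))\<^sup>2 = CARD('n)"
    by (simp add: norm_vec_power2 mat_def if_distrib[of "\<lambda>x. (norm x)\<^sup>2"] sum.delta cong: if_cong)
  then show ?thesis by (metis norm_ge_zero real_sqrt_unique)
qed

section \<open>Spectral theorem and singular value decomposition\<close>

lemma nonpos_quadratic_imp_linear_coeff_nonpos:
  fixes a b :: real
  assumes "\<And>t. 2 * t * a + t\<^sup>2 * b \<le> 0"
  shows "a \<le> 0"
proof (rule ccontr)
  assume "\<not> a \<le> 0"
  define t where "t = a / (\<bar>b\<bar> + 1)"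
  have "t > 0" "t * \<bar>b\<bar> < a"
    using \<open>\<not> a \<le> 0\<close> by (auto simp: t_def field_simps)
  then have "t\<^sup>2 * (- b) < t * a"
    by (smt (verit) abs_ge_minus_self mult_left_mono mult_strict_left_mono power2_eq_square
        mult.assoc)
  moreover have "t * a > 0" using \<open>t > 0\<close> \<open>\<not> a \<le> 0\<close> by simp
  ultimately show False using assms[of t] by linarith
qed

lemma symmetric_matrix_inner_commute:
  fixes A :: "real^'n^'n"
  assumes "transpose A = A"
  shows "(A *v x) \<bullet> y = x \<bullet> (A *v y)"
  by (metis assms dot_lmul_matrix transpose_matrix_vector)

text \<open>Moving \<open>v\<close> inside \<open>T\<close> along \<open>w = A v - (v \<bullet> A v) v\<close> changes the Rayleigh
  quotient to first order by \<open>2 t |w|\<^sup>2\<close>, so maximality forces \<open>w = 0\<close>.\<close>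

lemma rayleigh_maximizer_is_eigenvector:
  fixes A :: "real^'n^'n"
  assumes sym: "transpose A = A"
    and T: "subspace T" "\<And>x. x \<in> T \<Longrightarrow> A *v x \<in> T"
    and v: "v \<in> T" "norm v = 1"
    and max: "\<And>y. y \<in> T \<Longrightarrow> norm y = 1 \<Longrightarrow> y \<bullet> (A *v y) \<le> v \<bullet> (A *v v)"
  shows "A *v v = (v \<bullet> (A *v v)) *\<^sub>R v"
proof -
  define l where "l = v \<bullet> (A *v v)"
  define w where "w = A *v v - l *\<^sub>R v"
  have vv: "v \<bullet> v = 1" using v(2) by (simp add: norm_eq_1)
  have wT: "w \<in> T" unfolding w_def using T v(1) by (simp add: subspace_diff subspace_scale)
  have vw: "v \<bullet> w = 0" by (simp add: w_def l_def inner_diff_right vv)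
  have wAv: "w \<bullet> (A *v v) = w \<bullet> w"
    using vw by (simp add: w_def inner_diff_left inner_diff_right inner_commute)
  have max_hom: "y \<bullet> (A *v y) \<le> l * (y \<bullet> y)" if "y \<in> T" for y
  proof (cases "y = 0")
    case False
    have "y /\<^sub>R norm y \<in> T" using that T(1) by (simp add: subspace_scale)
    from max[OF this] False have "(y \<bullet> (A *v y)) / (norm y)\<^sup>2 \<le> l"
      by (simp add: l_def matrix_vector_mult_scaleR power2_eq_square divide_inverse mult_ac)
    then show ?thesis using False by (simp add: divide_le_eq power2_norm_eq_inner)
  qed simp
  have "2 * t * (w \<bullet> w) + t\<^sup>2 * (w \<bullet> (A *v w) - l * (w \<bullet> w)) \<le> 0" for t
  proof -
    have "(v + t *\<^sub>R w) \<bullet> (A *v (v + t *\<^sub>R w)) \<le> l * ((v + t *\<^sub>R w) \<bullet> (v + t *\<^sub>R w))"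
      using v(1) wT T(1) by (intro max_hom) (simp add: subspace_add subspace_scale)
    moreover have "v \<bullet> (A *v w) = w \<bullet> (A *v v)"
      by (metis sym symmetric_matrix_inner_commute inner_commute)
    ultimately show ?thesis
      using vw wAv vv
      by (simp add: matrix_vector_right_distrib matrix_vector_mult_scaleR inner_add_left
          inner_add_right inner_commute l_def power2_eq_square algebra_simps)
  qed
  then have "w \<bullet> w \<le> 0" by (rule nonpos_quadratic_imp_linear_coeff_nonpos)
  then have "w = 0" by (metis inner_eq_zero_iff inner_ge_zero order_antisym)
  then show ?thesis by (simp add: w_def l_def)
qed

lemma symmetric_matrix_eigenvector_orthogonal:
  fixes A :: "real^'n^'n"
  assumes sym: "transpose A = A" and S: "finite S" "card S < CARD('n)"
    and eig: "\<And>x. x \<in> S \<Longrightarrow> A *v x = (x \<bullet> (A *v x)) *\<^sub>R x"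
  obtains v where "norm v = 1" "\<And>s. s \<in> S \<Longrightarrow> orthogonal s v" "A *v v = (v \<bullet> (A *v v)) *\<^sub>R v"
proof -
  define T where "T = (\<Inter>s\<in>S. {x. s \<bullet> x = 0})"
  have T: "subspace T"
    unfolding T_def subspace_def by (auto simp: inner_add_right)
  have AT: "A *v x \<in> T" if "x \<in> T" for x
  proof -
    have "s \<bullet> (A *v x) = (s \<bullet> (A *v s)) * (s \<bullet> x)" if "s \<in> S" for s
      by (metis eig[OF that] sym symmetric_matrix_inner_commute inner_scaleR_left)
    then show ?thesis using \<open>x \<in> T\<close> by (simp add: T_def)
  qed
  have "dim S < DIM(real^'n)"
    using S dim_le_card' by fastforce
  then obtain x where "x \<noteq> 0" "\<And>y. y \<in> span S \<Longrightarrow> orthogonal x y"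
    using orthogonal_to_subspace_exists by blast
  then have "x /\<^sub>R norm x \<in> T \<inter> sphere 0 1"
    by (auto simp: T_def orthogonal_def span_base inner_commute)
  moreover have "compact (T \<inter> sphere 0 1)"
    unfolding T_def by (intro closed_Int_compact closed_INT) (auto simp: closed_hyperplane)
  moreover have "continuous_on (T \<inter> sphere 0 1) (\<lambda>x. x \<bullet> (A *v x))"
    by (intro continuous_intros)
  ultimately obtain v where v: "v \<in> T \<inter> sphere 0 1"
    and max: "\<And>y. y \<in> T \<inter> sphere 0 1 \<Longrightarrow> y \<bullet> (A *v y) \<le> v \<bullet> (A *v v)"
    using continuous_attains_sup[of "T \<inter> sphere 0 1"] by blast
  show ?thesis
  proof
    show "norm v = 1" using v by simp
    show "orthogonal s v" if "s \<in> S" for s using v that by (simp add: T_def orthogonal_def)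
    show "A *v v = (v \<bullet> (A *v v)) *\<^sub>R v"
      using v max by (intro rayleigh_maximizer_is_eigenvector[OF sym T AT]) auto
  qed
qed

lemma symmetric_matrix_orthonormal_eigenvectors:
  fixes A :: "real^'n^'n"
  assumes sym: "transpose A = A"
  shows "k \<le> CARD('n) \<Longrightarrow> \<exists>S. finite S \<and> card S = k \<and> pairwise orthogonal S \<and>
           (\<forall>x\<in>S. norm x = 1 \<and> A *v x = (x \<bullet> (A *v x)) *\<^sub>R x)"
proof (induction k)
  case 0
  show ?case by (intro exI[of _ "{}"]) simp
next
  case (Suc k)
  then obtain S where S: "finite S" "card S = k" "pairwise orthogonal S"
    "\<forall>x\<in>S. norm x = 1 \<and> A *v x = (x \<bullet> (A *v x)) *\<^sub>R x"
    by auto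
  obtain v where v: "norm v = 1" "\<And>s. s \<in> S \<Longrightarrow> orthogonal s v"
    "A *v v = (v \<bullet> (A *v v)) *\<^sub>R v"
    using symmetric_matrix_eigenvector_orthogonal[OF sym S(1)] S(2,4) Suc.prems by auto
  have "v \<notin> S"
    using v(1,2) by (metis inner_eq_zero_iff norm_zero orthogonal_def zero_neq_one)
  then show ?case
    using S v by (intro exI[of _ "insert v S"]) (auto simp: pairwise_insert orthogonal_commute)
qed

definition diag_mat :: "('n::finite \<Rightarrow> 'a::zero) \<Rightarrow> 'a^'n^'n" where
  "diag_mat d = (\<chi> i j. if i = j then d i else 0)"

lemma diag_mat_mult_left: "(diag_mat d ** M) $ i $ j = d i * (M $ i $ j :: 'a::semiring_1)"
  by (simp add: diag_mat_def matrix_matrix_mult_def if_distrib if_distribR sum.delta cong: if_cong)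

lemma diag_mat_mult_right: "(M ** diag_mat d) $ i $ j = (M $ i $ j :: 'a::semiring_1) * d j"
  by (simp add: diag_mat_def matrix_matrix_mult_def if_distrib if_distribR sum.delta' cong: if_cong)

lemma diag_mat_mult: "diag_mat a ** diag_mat b = diag_mat (\<lambda>i. a i * (b i :: 'a::semiring_1))"
  by (simp add: vec_eq_iff diag_mat_mult_left) (simp add: diag_mat_def)

lemma diag_mat_1: "diag_mat (\<lambda>i. 1) = (mat 1 :: 'a::semiring_1^'n^'n)"
  by (simp add: diag_mat_def mat_def)

lemma transpose_diag_mat [simp]: "transpose (diag_mat d) = diag_mat d"
  by (simp add: diag_mat_def transpose_def vec_eq_iff)

lemma det_diag_mat: "det (diag_mat d) = prod d UNIV"
  by (subst det_diagonal) (simp_all add: diag_mat_def)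

lemma symmetric_matrix_diagonalization:
  fixes A :: "real^'n^'n"
  assumes sym: "transpose A = A"
  obtains U d where "orthogonal_matrix U" "A ** U = U ** diag_mat d"
proof -
  obtain S where S: "finite S" "card S = CARD('n)" "pairwise orthogonal S"
    "\<forall>x\<in>S. norm x = 1 \<and> A *v x = (x \<bullet> (A *v x)) *\<^sub>R x"
    using symmetric_matrix_orthonormal_eigenvectors[OF sym, of "CARD('n)"] by auto
  obtain f where f: "bij_betw f (UNIV :: 'n set) S"
    by (metis S(1,2) finite_class.finite_UNIV finite_same_card_bij)
  then have fS: "f j \<in> S" for j
    by (auto simp: bij_betw_def)
  define U where "U = (\<chi> i j. f j $ i)"
  have column_U: "column j U = f j" for j
    by (simp add: U_def column_def)
  have "orthogonal_matrix U"
    unfolding orthogonal_matrix_orthonormal_columns column_U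
    using S(3,4) fS f by (auto simp: pairwise_def bij_betw_def inj_on_def) metis
  moreover have "A ** U = U ** diag_mat (\<lambda>j. f j \<bullet> (A *v f j))"
  proof -
    have "(A ** U) $ i $ j = (A *v f j) $ i" for i j
      by (simp add: matrix_matrix_mult_def matrix_vector_mult_def U_def)
    then show ?thesis
      using S(4) fS by (simp add: vec_eq_iff diag_mat_mult_right) (simp add: U_def mult.commute)
  qed
  ultimately show ?thesis by (rule that)
qed

lemma gram_matrix_diagonalization:
  fixes g :: "real^'n^'n"
  assumes "invertible g"
  obtains U d where "orthogonal_matrix U" "transpose U ** g ** transpose g ** U = diag_mat d"
    "\<And>j. d j > 0"
proof -
  have "transpose (g ** transpose g) = g ** transpose g"
    by (simp add: matrix_transpose_mul)
  then obtain U d where U: "orthogonal_matrix U" and AU: "g ** transpose g ** U = U ** diag_mat d"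
    by (rule symmetric_matrix_diagonalization)
  define M where "M = transpose g ** U"
  have MM: "transpose M ** M = diag_mat d"
    using U AU by (simp add: M_def matrix_transpose_mul matrix_mul_assoc orthogonal_matrix_def)
      (metis matrix_mul_assoc matrix_mul_lid)
  have "invertible M"
    using U assms unfolding M_def
    by (intro invertible_mult transpose_invertible) (auto simp: orthogonal_matrix_def invertible_def)
  then have "column j M \<noteq> 0" for j
    by (metis axis_eq_0_iff invertible_left_inverse matrix_left_invertible_ker
        matrix_vector_mult_basis zero_neq_one)
  moreover have "d j = column j M \<bullet> column j M" for j
    using MM by (simp add: matrix_mult_transpose_dot_column vec_eq_iff diag_mat_def)
  ultimately have "d j > 0" for j
    by simp
  moreover have "transpose U ** g ** transpose g ** U = diag_mat d"
    using MM by (simp add: M_def matrix_transpose_mul matrix_mul_assoc)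
  ultimately show ?thesis
    using that U by blast
qed

lemma invertible_matrix_svd:
  fixes g :: "real^'n^'n"
  assumes "invertible g"
  obtains U s V where "orthogonal_matrix U" "orthogonal_matrix V" "\<And>j. s j > 0"
    "g = U ** diag_mat s ** V"
proof -
  obtain U d where U: "orthogonal_matrix U" and D: "transpose U ** g ** transpose g ** U = diag_mat d"
    and d: "\<And>j. d j > 0"
    using gram_matrix_diagonalization[OF assms] by blast
  define s where "s j = sqrt (d j)" for j
  have s: "s j > 0" for j
    using d by (simp add: s_def)
  define V where "V = diag_mat (\<lambda>j. 1 / s j) ** transpose U ** g"
  have "diag_mat s ** diag_mat (\<lambda>j. 1 / s j) = mat 1"
    using s by (simp add: diag_mat_mult diag_mat_1[symmetric])
      (simp add: diag_mat_def vec_eq_iff less_imp_neq[symmetric])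
  then have "U ** diag_mat s ** V = U ** transpose U ** g"
    by (simp add: V_def matrix_mul_assoc) (metis matrix_mul_assoc matrix_mul_lid)
  also have "\<dots> = g"
    using U by (simp add: orthogonal_matrix_def)
  finally have g: "g = U ** diag_mat s ** V" ..
  have "V ** transpose V = diag_mat (\<lambda>j. 1 / s j) ** diag_mat d ** diag_mat (\<lambda>j. 1 / s j)"
    by (simp add: V_def matrix_transpose_mul matrix_mul_assoc D[symmetric])
  also have "\<dots> = mat 1"
    using d by (simp add: diag_mat_mult diag_mat_1[symmetric] s_def)
      (simp add: diag_mat_def fun_eq_iff vec_eq_iff less_imp_neq[symmetric] abs_of_pos)
  finally have "orthogonal_matrix V"
    by (simp add: orthogonal_matrix_def matrix_left_right_inverse)
  with U s g show ?thesis
    using that by blast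
qed

lemma SO_set_iff_rotation_matrix: "Q \<in> SO_set \<longleftrightarrow> rotation_matrix Q"
  by (simp add: SO_set_def rotation_matrix_def orthogonal_matrix)

lemma rotation_matrix_svd:
  fixes U V :: "real^'n^'n"
  assumes U: "orthogonal_matrix U" and V: "orthogonal_matrix V" and "\<And>j. s j > 0"
    and "det (U ** diag_mat s ** V) > 0"
  shows "rotation_matrix (U ** V)"
proof -
  have "prod s UNIV > 0"
    using assms(3) by (simp add: prod_pos)
  then have "det U * det V > 0"
    using assms(4) by (simp add: det_mul det_diag_mat zero_less_mult_iff mult_less_0_iff)
  moreover have "det U = 1 \<or> det U = -1" "det V = 1 \<or> det V = -1"
    using U V by (simp_all add: det_orthogonal_matrix)
  ultimately have "det (U ** V) = 1"
    by (auto simp: det_mul)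
  then show ?thesis
    using U V by (simp add: rotation_matrix_def orthogonal_matrix_mul)
qed

section \<open>Uniqueness of the principal square root\<close>

definition poly_matrix :: "'a::comm_ring_1 poly \<Rightarrow> 'a^'n^'n \<Rightarrow> 'a^'n^'n" where
  "poly_matrix q A = fold_coeffs (\<lambda>a M. mat a + A ** M) q 0"

lemma poly_matrix_0 [simp]: "poly_matrix 0 A = 0"
  by (simp add: poly_matrix_def)

lemma poly_matrix_pCons: "poly_matrix (pCons a p) A = mat a + A ** poly_matrix p A"
  by (cases "p = 0 \<and> a = 0") (auto simp: poly_matrix_def fold_coeffs_pCons_coeff_not_0_eq
      fold_coeffs_pCons_not_0_0_eq)

lemma poly_matrix_const: "poly_matrix [:c:] A = mat c"
  by (simp add: poly_matrix_pCons)

lemma poly_matrix_add: "poly_matrix (p + q) A = poly_matrix p A + poly_matrix q A"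
  by (induction p q rule: poly_induct2)
    (simp_all add: poly_matrix_pCons mat_add matrix_add_ldistrib algebra_simps)

lemma poly_matrix_diff: "poly_matrix (p - q) A = poly_matrix p A - poly_matrix q A"
  by (metis poly_matrix_add diff_add_cancel eq_diff_eq)

lemma poly_matrix_sum: "poly_matrix (\<Sum>x\<in>S. f x) A = (\<Sum>x\<in>S. poly_matrix (f x) A)"
  by (induction S rule: infinite_finite_induct) (simp_all add: poly_matrix_add)

lemma poly_matrix_smult: "poly_matrix (smult c p) A = mat c ** poly_matrix p A"
proof (induction p)
  case (pCons a p)
  have "mat c ** (mat a + A ** poly_matrix p A) = mat (c * a) + A ** (mat c ** poly_matrix p A)"
    by (simp add: matrix_add_ldistrib matrix_mul_assoc mat_mult_mat mat_mult_commute[of c A])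
  then show ?case
    using pCons by (simp add: poly_matrix_pCons)
qed simp

lemma poly_matrix_mult: "poly_matrix (p * q) A = poly_matrix p A ** poly_matrix q A"
  by (induction p)
    (simp_all add: poly_matrix_add poly_matrix_smult poly_matrix_pCons matrix_add_rdistrib
      matrix_mul_assoc)

lemma poly_matrix_linear: "poly_matrix [:-\<mu>, 1:] A = A - mat \<mu>"
proof -
  have "mat (- \<mu>) + A = A - mat \<mu>"
    by (simp add: vec_eq_iff mat_def)
  then show ?thesis by (simp add: poly_matrix_pCons)
qed

lemma mat_of_real_mult: "mat (of_real r) ** M = r *\<^sub>R (M :: 'a::real_algebra_1^'m^'n)"
  by (simp add: vec_eq_iff mat_mult_left of_real_def)

lemma poly_matrix_annihilator:
  fixes A :: "complex^'n^'n"
  obtains q where "q \<noteq> 0" "poly_matrix q A = 0"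
proof -
  define P where "P i = poly_matrix (monom 1 i) A" for i
  define m where "m = DIM(complex^'n^'n)"
  show ?thesis
  proof (cases "inj_on P {..m}")
    case False
    then obtain i j where "i \<noteq> j" "P i = P j"
      by (auto simp: inj_on_def)
    moreover from \<open>i \<noteq> j\<close> have "coeff (monom 1 i - monom 1 j) i = (1 :: complex)"
      by (simp add: coeff_monom)
    then have "monom 1 i - monom 1 j \<noteq> (0 :: complex poly)"
      by (metis coeff_0 zero_neq_one)
    ultimately show ?thesis
      by (intro that[of "monom 1 i - monom 1 j"]) (simp_all add: poly_matrix_diff P_def)
  next
    case True
    then have "dependent (P ` {..m})"
      by (intro dependent_biggerset) (simp add: card_image m_def)
    then obtain u where u: "\<exists>v\<in>P ` {..m}. u v \<noteq> 0" "(\<Sum>v\<in>P ` {..m}. u v *\<^sub>R v) = 0"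
      by (auto simp: real_vector.dependent_finite)
    define q where "q = (\<Sum>i\<le>m. monom (complex_of_real (u (P i))) i)"
    have "poly_matrix (monom (of_real r) i) A = r *\<^sub>R P i" for r i
      by (metis P_def mat_of_real_mult poly_matrix_smult smult_monom mult.right_neutral)
    then have "poly_matrix q A = (\<Sum>v\<in>P ` {..m}. u v *\<^sub>R v)"
      by (simp add: q_def poly_matrix_sum sum.reindex[OF True])
    moreover obtain k where "k \<le> m" "u (P k) \<noteq> 0"
      using u(1) by auto
    then have "coeff q k \<noteq> 0"
      by (simp add: q_def coeff_sum coeff_monom)
    ultimately show ?thesis
      using u(2) by (intro that[of q]) auto
  qed
qed

lemma cmat_eigenvalue_iff_det: "cmat_eigenvalue A c \<longleftrightarrow> det (A - mat c) = 0"
proof -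
  have "(A - mat c) *v v = A *v v - c *s v" for v
    by (simp add: matrix_vector_mult_diff_rdistrib matrix_vector_mult_mat)
  then have "cmat_eigenvalue A c \<longleftrightarrow> \<not> (\<forall>v. (A - mat c) *v v = 0 \<longrightarrow> v = 0)"
    by (auto simp: cmat_eigenvalue_def)
  then show ?thesis
    by (metis invertible_det_nz invertible_left_inverse matrix_left_invertible_ker)
qed

lemma cmat_eigenvalue_transpose: "cmat_eigenvalue (transpose A) c \<longleftrightarrow> cmat_eigenvalue A c"
proof -
  have "transpose A - mat c = transpose (A - mat c)"
    by (simp add: transpose_diff)
  then show ?thesis
    by (simp add: cmat_eigenvalue_iff_det)
qed

lemma cmat_eigenvalue_uminus: "cmat_eigenvalue (- A) c \<longleftrightarrow> cmat_eigenvalue A (- c)"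
proof -
  have "(- A) *v v = - (A *v v)" for v
    by (simp add: matrix_vector_mult_def vec_eq_iff sum_negf)
  then have "(- A) *v v = c *s v \<longleftrightarrow> A *v v = (- c) *s v" for v
    by (simp add: vec_eq_iff) (metis minus_equation_iff)
  then show ?thesis
    by (simp add: cmat_eigenvalue_def)
qed

lemma common_eigenvalue_of_scalar_intertwiner:
  fixes A B Y :: "complex^'n^'n"
  assumes "A ** Y = mat \<mu> ** Y" "Y ** B = mat \<mu> ** Y" "Y \<noteq> 0"
  shows "cmat_eigenvalue A \<mu>" "cmat_eigenvalue B \<mu>"
proof -
  obtain i j where ij: "Y $ i $ j \<noteq> 0"
    using assms(3) by (metis vec_eq_iff zero_index)
  have "(A ** Y) $ k $ j = \<mu> * Y $ k $ j" for k
    using assms(1) by (simp add: mat_mult_left)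
  then have "A *v column j Y = \<mu> *s column j Y"
    by (simp add: vec_eq_iff column_def matrix_vector_mult_def matrix_matrix_mult_def)
  moreover have "column j Y \<noteq> 0"
    using ij by (metis column_def vec_lambda_beta zero_index)
  ultimately show "cmat_eigenvalue A \<mu>"
    by (auto simp: cmat_eigenvalue_def)
  have "(Y ** B) $ i $ k = \<mu> * Y $ i $ k" for k
    using assms(2) by (simp add: mat_mult_left)
  then have "transpose B *v row i Y = \<mu> *s row i Y"
    by (simp add: vec_eq_iff row_def matrix_vector_mult_def transpose_def matrix_matrix_mult_def
        mult.commute)
  moreover have "row i Y \<noteq> 0"
    using ij by (metis row_def vec_lambda_beta zero_index)
  ultimately have "cmat_eigenvalue (transpose B) \<mu>"
    unfolding cmat_eigenvalue_def by blast
  then show "cmat_eigenvalue B \<mu>"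
    by (simp only: cmat_eigenvalue_transpose)
qed

text \<open>Sylvester's argument: if \<open>\<mu>\<close> is a root of \<open>q\<close>, then \<open>(A - \<mu>) Y\<close> is again an
  intertwiner, killed by the cofactor of \<open>X - \<mu>\<close>; by induction \<open>A Y = \<mu> Y = Y B\<close>, and a
  nonzero \<open>Y\<close> would make \<open>\<mu>\<close> a common eigenvalue.\<close>

lemma intertwiner_eq_0_of_poly:
  fixes A B Y :: "complex^'n^'n"
  assumes disjoint: "\<And>\<mu>. cmat_eigenvalue A \<mu> \<Longrightarrow> \<not> cmat_eigenvalue B \<mu>"
  shows "q \<noteq> 0 \<Longrightarrow> A ** Y = Y ** B \<Longrightarrow> poly_matrix q A ** Y = 0 \<Longrightarrow> Y = 0"
proof (induction "degree q" arbitrary: q Y rule: less_induct)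
  case less
  show ?case
  proof (cases "degree q = 0")
    case True
    then obtain c where "q = [:c:]" "c \<noteq> 0"
      using less.prems(1) by (metis degree_eq_zeroE pCons_0_0)
    then show ?thesis
      using less.prems(3) by (simp add: poly_matrix_const vec_eq_iff mat_mult_left)
  next
    case False
    then obtain \<mu> where "poly q \<mu> = 0"
      using fundamental_theorem_of_algebra constant_degree by metis
    then obtain r where qr: "q = [:-\<mu>, 1:] * r"
      by (metis poly_eq_0_iff_dvd dvdE)
    with less.prems(1) have "r \<noteq> 0" "degree r < degree q"
      by (auto simp del: mult_pCons_left simp add: degree_mult_eq)
    define Y' where "Y' = (A - mat \<mu>) ** Y"
    have "poly_matrix q A = poly_matrix r A ** (A - mat \<mu>)"
      unfolding qr mult.commute[of _ r] poly_matrix_mult poly_matrix_linear ..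
    then have "poly_matrix r A ** Y' = 0"
      using less.prems(3) by (simp add: Y'_def matrix_mul_assoc)
    moreover have "A ** Y' = Y' ** B"
    proof -
      have "A ** (A - mat \<mu>) = (A - mat \<mu>) ** A"
        by (simp add: matrix_diff_ldistrib matrix_diff_rdistrib mat_mult_commute[of \<mu> A])
      then show ?thesis
        using less.prems(2) by (metis Y'_def matrix_mul_assoc)
    qed
    ultimately have "Y' = 0"
      using less.hyps \<open>r \<noteq> 0\<close> \<open>degree r < degree q\<close> by blast
    then have "A ** Y = mat \<mu> ** Y" "Y ** B = mat \<mu> ** Y"
      using less.prems(2) by (simp_all add: Y'_def matrix_diff_rdistrib)
    then show ?thesis
      using common_eigenvalue_of_scalar_intertwiner disjoint by blast
  qed
qed

lemma intertwiner_eq_0: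
  fixes A B Y :: "complex^'n^'n"
  assumes "\<And>\<mu>. cmat_eigenvalue A \<mu> \<Longrightarrow> \<not> cmat_eigenvalue B \<mu>" and "A ** Y = Y ** B"
  shows "Y = 0"
proof -
  obtain q where "q \<noteq> 0" "poly_matrix q A = 0"
    by (rule poly_matrix_annihilator)
  then show ?thesis
    using intertwiner_eq_0_of_poly[OF assms(1) _ assms(2)] by simp
qed

lemma matrix_sqrt_unique:
  fixes S T :: "complex^'n^'n"
  assumes "S ** S = T ** T"
    and "\<And>c. cmat_eigenvalue S c \<Longrightarrow> Re c > 0" "\<And>c. cmat_eigenvalue T c \<Longrightarrow> Re c > 0"
  shows "S = T"
proof -
  have "S ** (S - T) = (S - T) ** (- T)"
    using assms(1) by (simp add: matrix_diff_ldistrib matrix_diff_rdistrib matrix_minus_right)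
  moreover have "\<not> cmat_eigenvalue (- T) \<mu>" if "cmat_eigenvalue S \<mu>" for \<mu>
    using assms(2)[OF that] assms(3)[of "- \<mu>"] by (auto simp: cmat_eigenvalue_uminus)
  ultimately have "S - T = 0"
    by (intro intertwiner_eq_0[of S "- T"]) auto
  then show ?thesis by simp
qed

lemma psqrt_eqI:
  assumes "S ** S = M" "\<And>c. cmat_eigenvalue S c \<Longrightarrow> Re c > 0"
  shows "psqrt M = S"
  unfolding psqrt_def using assms matrix_sqrt_unique by (intro the_equality) auto

section \<open>Eigenvalues of real congruences of near-identity matrices\<close>

lemma cplx_mult: "cplx A ** cplx B = cplx (A ** B)"
  by (simp add: cplx_def matrix_matrix_mult_def vec_eq_iff)

lemma cplx_mat_1: "cplx (mat 1) = mat 1"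
  by (simp add: cplx_def mat_def vec_eq_iff)

lemma transpose_cplx: "transpose (cplx A) = cplx (transpose A)"
  by (simp add: cplx_def transpose_def vec_eq_iff)

definition herm_inner :: "complex^'n \<Rightarrow> complex^'n \<Rightarrow> complex" where
  "herm_inner v w = (\<Sum>i\<in>UNIV. cnj (v $ i) * w $ i)"

lemma herm_inner_self: "herm_inner v v = of_real ((norm v)\<^sup>2)"
proof -
  have "cnj (v $ i) * v $ i = of_real ((norm (v $ i))\<^sup>2)" for i
    by (simp only: complex_norm_square mult.commute)
  then show ?thesis
    by (simp add: herm_inner_def norm_vec_power2)
qed

lemma norm_herm_inner_le: "norm (herm_inner v w) \<le> norm v * norm w"
  using norm_sum_mult_le[of "\<lambda>i. cnj (v $ i)" "\<lambda>i. w $ i" UNIV]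
  by (simp add: herm_inner_def norm_vec_def)

lemma herm_inner_add_right: "herm_inner v (w + w') = herm_inner v w + herm_inner v w'"
  by (simp add: herm_inner_def distrib_left sum.distrib)

lemma herm_inner_cmult_right: "herm_inner v (c *s w) = c * herm_inner v w"
  by (simp add: herm_inner_def sum_distrib_left mult.left_commute)

lemma herm_inner_cplx_right: "herm_inner v (cplx G *v w) = herm_inner (cplx (transpose G) *v v) w"
proof -
  have "herm_inner v (cplx G *v w) = (\<Sum>i\<in>UNIV. \<Sum>k\<in>UNIV. cnj (v $ i) * (of_real (G $ i $ k) * w $ k))"
    by (simp add: herm_inner_def cplx_def matrix_vector_mult_def sum_distrib_left)
  also have "\<dots> = (\<Sum>k\<in>UNIV. \<Sum>i\<in>UNIV. cnj (v $ i) * (of_real (G $ i $ k) * w $ k))"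
    by (rule sum.swap)
  also have "\<dots> = herm_inner (cplx (transpose G) *v v) w"
    by (simp add: herm_inner_def cplx_def matrix_vector_mult_def transpose_def sum_distrib_right
        sum_distrib_left mult_ac)
  finally show ?thesis .
qed

lemma Re_herm_inner_pos:
  assumes "norm (P - mat 1) < 1" and "w \<noteq> 0"
  shows "Re (herm_inner w (P *v w)) > 0"
proof -
  have "P *v w = w + (P - mat 1) *v w"
    by (simp add: matrix_vector_mult_diff_rdistrib)
  then have "herm_inner w (P *v w) = of_real ((norm w)\<^sup>2) + herm_inner w ((P - mat 1) *v w)"
    by (simp add: herm_inner_add_right herm_inner_self)
  moreover have "\<bar>Re (herm_inner w ((P - mat 1) *v w))\<bar> \<le> norm w * (norm (P - mat 1) * norm w)"
    by (rule order_trans[OF abs_Re_le_cmod order_trans[OF norm_herm_inner_le]])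
      (simp add: mult_left_mono norm_matrix_vector_mult_le)
  moreover have "norm w * (norm (P - mat 1) * norm w) < (norm w)\<^sup>2"
    using assms by (simp add: power2_eq_square)
  ultimately show ?thesis by simp
qed

lemma cmat_eigenvalue_congruence_Re_pos:
  fixes G :: "real^'n^'n"
  assumes "invertible G" and "norm (P - mat 1) < 1"
    and "cmat_eigenvalue (cplx G ** P ** cplx (transpose G)) c"
  shows "Re c > 0"
proof -
  obtain v where v: "v \<noteq> 0" "(cplx G ** P ** cplx (transpose G)) *v v = c *s v"
    using assms(3) cmat_eigenvalue_def by blast
  define w where "w = cplx (transpose G) *v v"
  obtain G' where "transpose G' ** transpose G = mat 1"
    using assms(1) by (metis invertible_def matrix_transpose_mul transpose_mat)
  then have "cplx (transpose G') *v w = v"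
    by (simp add: w_def matrix_vector_mul_assoc cplx_mult cplx_mat_1)
  then have "w \<noteq> 0"
    using v(1) by auto
  have "c * of_real ((norm v)\<^sup>2) = herm_inner v ((cplx G ** P ** cplx (transpose G)) *v v)"
    using v(2) by (simp add: herm_inner_cmult_right herm_inner_self)
  also have "\<dots> = herm_inner w (P *v w)"
    by (simp add: w_def matrix_vector_mul_assoc[symmetric] herm_inner_cplx_right)
  finally have "Re (c * of_real ((norm v)\<^sup>2)) > 0"
    using Re_herm_inner_pos[OF assms(2) \<open>w \<noteq> 0\<close>] by metis
  moreover have "Re (c * of_real t) = Re c * t" for t
    by simp
  ultimately have "Re c * (norm v)\<^sup>2 > 0"
    by metis
  then show ?thesis
    by (simp add: zero_less_mult_iff)
qed

lemma cmat_eigenvalue_similar: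
  assumes "A ** B = mat 1" "B ** A = mat 1" "cmat_eigenvalue (A ** X ** B) c"
  shows "cmat_eigenvalue X c"
proof -
  obtain v where v: "v \<noteq> 0" "(A ** X ** B) *v v = c *s v"
    using assms(3) cmat_eigenvalue_def by blast
  have "A *v (B *v v) = v"
    using assms(1) by (simp add: matrix_vector_mul_assoc)
  then have "B *v v \<noteq> 0"
    using v(1) by auto
  moreover have "X *v (B *v v) = c *s (B *v v)"
    using arg_cong[OF v(2), of "\<lambda>x. B *v x"] assms(2)
    by (simp add: matrix_vector_mul_assoc matrix_vector_mult_cmult)
      (metis matrix_mul_assoc matrix_mul_lid)
  ultimately show ?thesis
    unfolding cmat_eigenvalue_def by blast
qed

section \<open>A near-identity factor symmetrized by a positive diagonal\<close>

text \<open>The weights \<open>x\<^sub>i\<^sub>j = d\<^sub>j / (d\<^sub>i + d\<^sub>j)\<close> solve \<open>x\<^sub>i\<^sub>j + x\<^sub>j\<^sub>i = 1\<close> and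
  \<open>d\<^sub>i x\<^sub>i\<^sub>j = d\<^sub>j x\<^sub>j\<^sub>i\<close>, so for symmetric \<open>Y\<close> the matrix \<open>X = weighted_split d Y\<close> satisfies
  \<open>X + X\<^sup>T = Y\<close> while \<open>diag d (I + X)\<close> is symmetric.\<close>

definition weighted_split :: "('n::finite \<Rightarrow> real) \<Rightarrow> complex^'n^'n \<Rightarrow> complex^'n^'n" where
  "weighted_split d Y = (\<chi> i j. of_real (d j / (d i + d j)) * Y $ i $ j)"

lemma norm_weighted_split_le:
  assumes "\<And>i. d i > 0"
  shows "norm (weighted_split d Y) \<le> norm Y"
proof -
  have "norm (weighted_split d Y $ i $ j) \<le> norm (Y $ i $ j)" for i j
  proof -
    have "\<bar>d j / (d i + d j)\<bar> \<le> 1"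
      using assms[of i] assms[of j] by (simp add: abs_le_iff divide_le_eq)
    moreover have "norm (weighted_split d Y $ i $ j) = \<bar>d j / (d i + d j)\<bar> * norm (Y $ i $ j)"
      by (simp only: weighted_split_def vec_lambda_beta norm_mult norm_of_real)
    ultimately show ?thesis
      by (metis mult_right_mono[of _ 1 "norm (Y $ i $ j)"] norm_ge_zero mult_1)
  qed
  then have "norm (weighted_split d Y $ i) \<le> norm (Y $ i)" for i
    unfolding norm_vec_def by (intro L2_set_mono) auto
  then show ?thesis
    unfolding norm_vec_def[of "weighted_split d Y"] norm_vec_def[of Y]
    by (intro L2_set_mono) auto
qed

lemma weighted_split_diff: "weighted_split d Y - weighted_split d Z = weighted_split d (Y - Z)"
  by (simp add: weighted_split_def vec_eq_iff right_diff_distrib)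

lemma weighted_split_add_transpose:
  assumes "\<And>i. d i > 0" and "transpose Y = Y"
  shows "weighted_split d Y + transpose (weighted_split d Y) = Y"
proof -
  have "(weighted_split d Y + transpose (weighted_split d Y)) $ i $ j = Y $ i $ j" for i j
  proof -
    have "d i + d j > 0"
      using assms(1)[of i] assms(1)[of j] by simp
    then have "d j / (d i + d j) + d i / (d j + d i) = 1"
      by (metis add.commute add_divide_distrib less_irrefl divide_self)
    moreover have "Y $ j $ i = Y $ i $ j"
      using assms(2) by (metis transpose_def vec_lambda_beta)
    ultimately show ?thesis
      by (simp add: weighted_split_def transpose_def distrib_right[symmetric]
          of_real_add[symmetric] del: of_real_add of_real_divide)
  qed
  then show ?thesis
    by (simp add: vec_eq_iff)
qed

lemma diag_weighted_split_symmetric: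
  assumes "transpose Y = Y"
  shows "transpose (cplx (diag_mat d) ** (mat 1 + weighted_split d Y))
    = cplx (diag_mat d) ** (mat 1 + weighted_split d Y)"
proof -
  have "cplx (diag_mat d) = diag_mat (\<lambda>i. of_real (d i))"
    by (simp add: cplx_def diag_mat_def vec_eq_iff)
  then have entry: "(cplx (diag_mat d) ** (mat 1 + weighted_split d Y)) $ i $ j
      = (if i = j then of_real (d i) else 0) + of_real (d i * d j / (d i + d j)) * Y $ i $ j"
    for i j
    by (simp add: diag_mat_mult_left weighted_split_def mat_def distrib_left mult.assoc)
  have "Y $ j $ i = Y $ i $ j" for i j
    using assms by (metis transpose_def vec_lambda_beta)
  then show ?thesis
    by (simp add: vec_eq_iff transpose_def entry add.commute mult.commute)
qed

lemma norm_weighted_split_square_diff_le: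
  assumes d: "\<And>i. d i > 0"
  shows "norm (weighted_split d Y ** transpose (weighted_split d Y)
      - weighted_split d Z ** transpose (weighted_split d Z)) \<le> (norm Y + norm Z) * norm (Y - Z)"
proof -
  define K where "K = weighted_split d"
  have norm_KK: "norm (K Y ** transpose (K Z)) \<le> norm Y * norm Z" for Y Z
    using norm_matrix_mult_le[of "K Y" "transpose (K Z)"]
      norm_weighted_split_le[of d Y, OF d] norm_weighted_split_le[of d Z, OF d]
    by (simp add: K_def norm_transpose) (meson mult_mono norm_ge_zero order_trans)
  have "K Y ** transpose (K Y) - K Z ** transpose (K Z)
      = K (Y - Z) ** transpose (K Y) + K Z ** transpose (K (Y - Z))"
    by (simp add: K_def weighted_split_diff[symmetric] transpose_diff matrix_diff_ldistrib
        matrix_diff_rdistrib)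
  then have "norm (K Y ** transpose (K Y) - K Z ** transpose (K Z))
      \<le> norm (Y - Z) * norm Y + norm Z * norm (Y - Z)"
    using norm_triangle_ineq[of "K (Y - Z) ** transpose (K Y)" "K Z ** transpose (K (Y - Z))"]
      norm_KK[of "Y - Z" Y] norm_KK[of Z "Y - Z"]
    by simp
  then show ?thesis
    by (simp add: K_def algebra_simps)
qed

lemma weighted_split_fixpoint:
  fixes E :: "complex^'n^'n"
  assumes d: "\<And>i. d i > 0" and E: "norm E \<le> 1/8"
  obtains Y where "norm Y \<le> 2 * norm E"
    "Y = E - weighted_split d Y ** transpose (weighted_split d Y)"
proof -
  define Q where "Q Y = weighted_split d Y ** transpose (weighted_split d Y)" for Y
  define T where "T Y = E - Q Y" for Y
  define B where "B = cball (0 :: complex^'n^'n) (2 * norm E)"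
  have Q_diff: "norm (Q Y - Q Z) \<le> (norm Y + norm Z) * norm (Y - Z)" for Y Z
    unfolding Q_def by (rule norm_weighted_split_square_diff_le[OF d])
  have "weighted_split d 0 = 0"
    by (simp add: weighted_split_def vec_eq_iff)
  then have "Q 0 = 0"
    by (simp add: Q_def)
  then have Q_le: "norm (Q Y) \<le> norm Y * norm Y" for Y
    using Q_diff[of Y 0] by simp
  have "T ` B \<subseteq> B"
  proof clarify
    fix Y assume "Y \<in> B"
    then have "norm Y * norm Y \<le> (2 * norm E) * (2 * norm E)"
      by (intro mult_mono) (simp_all add: B_def)
    also have "\<dots> \<le> norm E"
      using mult_left_mono[OF E norm_ge_zero[of E]] mult_nonneg_nonneg[OF norm_ge_zero norm_ge_zero, of E E]
      by linarith
    finally show "T Y \<in> B"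
      using norm_triangle_ineq4[of E "Q Y"] Q_le[of Y] by (simp add: B_def T_def)
  qed
  moreover have "dist (T Y) (T Z) \<le> 1/2 * dist Y Z" if "Y \<in> B" "Z \<in> B" for Y Z
  proof -
    have "dist (T Y) (T Z) \<le> (norm Y + norm Z) * dist Y Z"
      using Q_diff[of Y Z] by (simp add: T_def dist_norm norm_minus_commute)
    also have "\<dots> \<le> 1/2 * dist Y Z"
      using that E by (intro mult_right_mono) (simp_all add: B_def)
    finally show ?thesis .
  qed
  ultimately have "\<exists>!Y\<in>B. T Y = Y"
    by (intro Banach_fix[where c = "1/2"]) (auto simp: B_def complete_eq_closed)
  then obtain Y where "Y \<in> B" "T Y = Y"
    by blast
  then show ?thesis
    by (intro that[of Y]) (simp_all add: B_def T_def Q_def)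
qed

lemma near_identity_symmetrizing_factor:
  fixes E :: "complex^'n^'n"
  assumes d: "\<And>i. d i > 0" and E: "transpose E = E" "norm E \<le> 1/8"
  obtains W where "transpose (cplx (diag_mat d) ** W) = cplx (diag_mat d) ** W"
    "W ** transpose W = mat 1 + E" "norm (W - mat 1) \<le> 2 * norm E"
proof -
  obtain Y where Y: "norm Y \<le> 2 * norm E"
    "Y = E - weighted_split d Y ** transpose (weighted_split d Y)"
    by (rule weighted_split_fixpoint[OF d E(2)])
  define X where "X = weighted_split d Y"
  have "transpose (E - X ** transpose X) = E - X ** transpose X"
    using E(1) by (simp add: transpose_diff matrix_transpose_mul)
  then have "transpose Y = Y"
    using Y(2) by (simp add: X_def)
  then have "X + transpose X = Y"
    unfolding X_def by (rule weighted_split_add_transpose[OF d])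
  then have "(mat 1 + X) ** transpose (mat 1 + X) = mat 1 + Y + X ** transpose X"
    by (simp add: transpose_add matrix_add_ldistrib matrix_add_rdistrib add_ac)
  also have "\<dots> = mat 1 + E"
    using Y(2) by (simp add: X_def[symmetric])
  finally have "(mat 1 + X) ** transpose (mat 1 + X) = mat 1 + E" .
  moreover have "norm (mat 1 + X - mat 1) \<le> 2 * norm E"
    using norm_weighted_split_le[of d Y, OF d] Y(1) by (simp add: X_def)
  ultimately show ?thesis
    using that[of "mat 1 + X"] diag_weighted_split_symmetric[OF \<open>transpose Y = Y\<close>, of d]
    by (simp add: X_def)
qed

section \<open>The polar factor on \<open>E\<^sub>\<delta>\<close>\<close>

lemma opnorm_le_norm: "opnorm A \<le> norm A"
  unfolding opnorm_def by (rule onorm_le) (metis norm_matrix_vector_mult_le mult.commute)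

lemma norm_le_sqrt_card_opnorm: "norm A \<le> sqrt CARD('n) * opnorm (A :: 'n::finite cmat)"
proof -
  have "norm (column j A) \<le> opnorm A" for j
  proof -
    have "column j A = A *v axis j 1"
      by (simp add: column_def matrix_vector_mult_def axis_def vec_eq_iff if_distrib if_distribR
          sum.delta' cong: if_cong)
    then show ?thesis
      using onorm[OF matrix_vector_mul_bounded_linear, of A "axis j 1"]
      by (simp add: opnorm_def)
  qed
  then have "norm A \<le> L2_set (\<lambda>j. opnorm A) (UNIV :: 'n set)"
    unfolding norm_matrix_columns[of A] by (intro L2_set_mono) auto
  then show ?thesis
    by (simp add: L2_set_constant opnorm_def onorm_pos_le)
qed

lemma norm_cplx_orthogonal:
  assumes "orthogonal_matrix U"
  shows "norm (cplx U :: 'n::finite cmat) = sqrt CARD('n)"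
proof -
  have "(norm (cplx U :: 'n cmat))\<^sup>2 = (\<Sum>i\<in>UNIV. (U ** transpose U) $ i $ i)"
    by (simp add: norm_vec_power2 cplx_def) (simp add: matrix_matrix_mult_def transpose_def power2_eq_square)
  also have "\<dots> = CARD('n)"
    using assms by (simp add: orthogonal_matrix_def mat_def)
  finally show ?thesis
    by (metis norm_ge_zero real_sqrt_unique)
qed

lemma norm_cplx_orthogonal_sandwich_le:
  assumes "orthogonal_matrix U" "orthogonal_matrix V"
  shows "norm (cplx U ** A ** cplx V) \<le> CARD('n) * norm (A :: 'n::finite cmat)"
proof -
  have "norm (cplx U ** A ** cplx V) \<le> sqrt CARD('n) * norm A * sqrt CARD('n)"
    using norm_matrix_mult_le[of "cplx U ** A" "cplx V"] norm_matrix_mult_le[of "cplx U" A]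
    by (simp add: assms norm_cplx_orthogonal mult_right_mono order_trans)
  then show ?thesis
    by (simp add: mult_ac)
qed

lemma matrix_inv_inverse:
  assumes "invertible A"
  shows "A ** matrix_inv A = mat 1" "matrix_inv A ** A = mat 1"
  using someI_ex[OF assms[unfolded invertible_def]] by (simp_all add: matrix_inv_def)

lemma invertible_iff_no_zero_eigenvalue: "invertible A \<longleftrightarrow> \<not> cmat_eigenvalue A 0"
  by (simp add: cmat_eigenvalue_iff_det invertible_det_nz)

lemma invertible_near_identity:
  fixes W :: "'n::finite cmat"
  assumes "norm (W - mat 1) < 1"
  shows "invertible W"
proof -
  have "v = 0" if "W *v v = 0" for v
    using Re_herm_inner_pos[OF assms, of v] that by (auto simp: herm_inner_def)
  then show ?thesis
    by (simp add: invertible_left_inverse matrix_left_invertible_ker)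
qed

lemma norm_matrix_inv_sub_1_le:
  fixes W :: "'n::finite cmat"
  assumes "norm (W - mat 1) \<le> 1/2"
  shows "norm (matrix_inv W - mat 1) \<le> 2 * sqrt CARD('n) * norm (W - mat 1)"
proof -
  define x where "x = norm (matrix_inv W - mat 1)"
  have WiW: "matrix_inv W ** W = mat 1"
    using assms by (intro matrix_inv_inverse invertible_near_identity) simp
  have "matrix_inv W - mat 1 = - (matrix_inv W ** (W - mat 1))"
    using WiW by (simp add: matrix_diff_ldistrib)
  then have "x \<le> norm (matrix_inv W) * norm (W - mat 1)"
    by (metis x_def norm_minus_cancel norm_matrix_mult_le)
  also have "\<dots> \<le> (sqrt CARD('n) + x) * norm (W - mat 1)"
    using norm_triangle_ineq[of "matrix_inv W - mat 1" "mat 1"]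
    by (intro mult_right_mono) (simp_all add: x_def norm_mat_1)
  finally have "x * (1 - norm (W - mat 1)) \<le> sqrt CARD('n) * norm (W - mat 1)"
    by (simp add: algebra_simps)
  moreover have "x * (1/2) \<le> x * (1 - norm (W - mat 1))"
    using assms by (intro mult_left_mono) (simp_all add: x_def)
  ultimately show ?thesis
    by (simp add: x_def)
qed

lemma cplx_orthogonal_inverse:
  assumes "orthogonal_matrix U"
  shows "cplx U ** cplx (transpose U) = mat 1" "cplx (transpose U) ** cplx U = mat 1"
  using assms by (simp_all add: cplx_mult cplx_mat_1 orthogonal_matrix_def)

lemma cplx_diag_mat_inverse:
  assumes "\<And>j. s j > 0"
  shows "cplx (diag_mat s) ** cplx (diag_mat (\<lambda>j. 1 / s j)) = mat 1"
    "cplx (diag_mat (\<lambda>j. 1 / s j)) ** cplx (diag_mat s) = mat 1"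
proof -
  have "(\<lambda>j. s j * (1 / s j)) = (\<lambda>j. 1)" "(\<lambda>j. 1 / s j * s j) = (\<lambda>j. 1)"
    using assms by (simp_all add: fun_eq_iff less_imp_neq[symmetric])
  then show "cplx (diag_mat s) ** cplx (diag_mat (\<lambda>j. 1 / s j)) = mat 1"
    "cplx (diag_mat (\<lambda>j. 1 / s j)) ** cplx (diag_mat s) = mat 1"
    by (simp_all add: cplx_mult diag_mat_mult diag_mat_1 cplx_mat_1)
qed

lemma cmat_eigenvalue_diag_mult_Re_pos:
  fixes U :: "real^'n^'n" and W :: "'n::finite cmat"
  assumes U: "orthogonal_matrix U" and s: "\<And>j. s j > 0" and W: "norm (W - mat 1) < 1"
    and c: "cmat_eigenvalue (cplx U ** (cplx (diag_mat s) ** W) ** cplx (transpose U)) c"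
  shows "Re c > 0"
proof -
  \<comment> \<open>the matrix is \<open>A (G W G\<^sup>T) A\<^sup>-\<^sup>1\<close> with \<open>G = D\<^sup>1\<^sup>/\<^sup>2\<close> and \<open>A = U G\<close>\<close>
  define G where "G = diag_mat (\<lambda>j. sqrt (s j))"
  define Gi where "Gi = diag_mat (\<lambda>j. 1 / sqrt (s j))"
  define A where "A = cplx U ** cplx G"
  define B where "B = cplx Gi ** cplx (transpose U)"
  have sqrt_s: "\<And>j. sqrt (s j) > 0"
    using s by simp
  have GGi: "cplx G ** cplx Gi = mat 1" "cplx Gi ** cplx G = mat 1"
    unfolding G_def Gi_def by (fact cplx_diag_mat_inverse[OF sqrt_s])+
  have "(\<lambda>j. sqrt (s j) * sqrt (s j)) = s"
    using s by (simp add: fun_eq_iff less_imp_le)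
  then have GG: "cplx G ** cplx G = cplx (diag_mat s)"
    by (simp add: G_def cplx_mult diag_mat_mult)
  have "A ** B = cplx U ** (cplx G ** cplx Gi) ** cplx (transpose U)"
    "B ** A = cplx Gi ** (cplx (transpose U) ** cplx U) ** cplx G"
    by (simp_all add: A_def B_def matrix_mul_assoc)
  then have "A ** B = mat 1" "B ** A = mat 1"
    by (simp_all add: GGi cplx_orthogonal_inverse[OF U])
  moreover have "A ** (cplx G ** W ** cplx (transpose G)) ** B
      = cplx U ** (cplx G ** cplx G) ** W ** (cplx G ** cplx Gi) ** cplx (transpose U)"
    by (simp add: A_def B_def G_def matrix_mul_assoc)
  then have "A ** (cplx G ** W ** cplx (transpose G)) ** B
      = cplx U ** (cplx (diag_mat s) ** W) ** cplx (transpose U)"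
    by (simp add: GG GGi matrix_mul_assoc)
  ultimately have "cmat_eigenvalue (cplx G ** W ** cplx (transpose G)) c"
    using c cmat_eigenvalue_similar by metis
  moreover have "det G > 0"
    unfolding G_def det_diag_mat using sqrt_s by (intro prod_pos) auto
  then have "invertible G"
    by (simp add: invertible_det_nz)
  ultimately show ?thesis
    using cmat_eigenvalue_congruence_Re_pos W by blast
qed

lemma psi_svd_formula:
  fixes U V :: "real^'n^'n" and W p :: "'n::finite cmat"
  assumes U: "orthogonal_matrix U" and V: "orthogonal_matrix V" and s: "\<And>j. s j > 0"
    and W_sym: "transpose (cplx (diag_mat s) ** W) = cplx (diag_mat s) ** W"
    and WW: "W ** transpose W = cplx V ** (p ** transpose p) ** cplx (transpose V)"
    and W: "norm (W - mat 1) < 1"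
  shows "psi (cplx (U ** diag_mat s ** V) ** p) = cplx U ** matrix_inv W ** cplx V ** p"
proof -
  define D where "D = cplx (diag_mat s)"
  define h where "h = cplx (U ** diag_mat s ** V) ** p"
  define S where "S = cplx U ** (D ** W) ** cplx (transpose U)"
  have U_cancel: "X ** cplx (transpose U) ** cplx U = X" for X :: "'n cmat"
    by (simp add: matrix_mul_assoc[symmetric] cplx_orthogonal_inverse[OF U])
  have W_cancel: "X ** W ** matrix_inv W = X" for X :: "'n cmat"
    using matrix_inv_inverse(1)[OF invertible_near_identity[OF W]]
    by (simp add: matrix_mul_assoc[symmetric])
  have "S ** S = cplx U ** ((D ** W) ** transpose (D ** W)) ** cplx (transpose U)"
    using W_sym by (simp add: S_def D_def matrix_mul_assoc U_cancel)
  also have "\<dots> = cplx U ** D ** (W ** transpose W) ** D ** cplx (transpose U)"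
    by (simp add: D_def matrix_transpose_mul transpose_cplx matrix_mul_assoc)
  also have "\<dots> = h ** transpose h"
    by (simp add: WW h_def D_def matrix_transpose_mul transpose_cplx cplx_mult[symmetric]
        matrix_mul_assoc)
  finally have "psqrt (h ** transpose h) = S"
    using cmat_eigenvalue_diag_mult_Re_pos[OF U s W] by (intro psqrt_eqI) (simp_all add: S_def D_def)
  moreover have "invertible S"
    using cmat_eigenvalue_diag_mult_Re_pos[OF U s W, where c = 0]
    by (auto simp: invertible_iff_no_zero_eigenvalue S_def D_def)
  moreover have "S ** (cplx U ** matrix_inv W ** cplx V ** p) = h"
    by (simp add: S_def h_def D_def matrix_mul_assoc U_cancel W_cancel cplx_mult[symmetric])
  ultimately have "psi h = (matrix_inv S ** S) ** (cplx U ** matrix_inv W ** cplx V ** p)"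
    by (simp add: psi_def matrix_mul_assoc[symmetric])
  then show ?thesis
    using matrix_inv_inverse(2)[OF \<open>invertible S\<close>] by (simp add: h_def)
qed

lemma norm_mult_transpose_sub_1_le:
  fixes p :: "'a::real_normed_algebra_1^'n^'n"
  assumes "norm (p - mat 1) \<le> 1"
  shows "norm (p ** transpose p - mat 1) \<le> 3 * norm (p - mat 1)"
proof -
  define e where "e = norm (p - mat 1)"
  have "p ** transpose p - mat 1
      = (p - mat 1) ** transpose (p - mat 1) + (p - mat 1) + transpose (p - mat 1)"
    by (simp add: transpose_diff matrix_diff_ldistrib matrix_diff_rdistrib)
  then have "norm (p ** transpose p - mat 1) \<le> norm ((p - mat 1) ** transpose (p - mat 1))
      + norm (p - mat 1) + norm (transpose (p - mat 1))"
    by (simp only:) (rule order_trans[OF norm_triangle_ineq add_right_mono[OF norm_triangle_ineq]])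
  also have "\<dots> \<le> e * e + e + e"
    using norm_matrix_mult_le[of "p - mat 1" "transpose (p - mat 1)"]
    by (simp add: norm_transpose e_def)
  also have "\<dots> \<le> 3 * e"
    using assms mult_left_le_one_le[of e e] by (simp add: e_def)
  finally show ?thesis
    by (simp add: e_def)
qed

lemma norm_polar_factor_sub_rotation_le:
  fixes U V :: "real^'n^'n" and W p :: "'n::finite cmat"
  assumes U: "orthogonal_matrix U" and V: "orthogonal_matrix V" and W: "norm (W - mat 1) \<le> 1/2"
  shows "norm (cplx U ** matrix_inv W ** cplx V ** p - cplx (U ** V))
    \<le> 2 * sqrt CARD('n) ^ 3 * norm (W - mat 1) * norm p + sqrt CARD('n) * norm (p - mat 1)"
proof -
  define r where "r = sqrt CARD('n)"
  have "cplx U ** matrix_inv W ** cplx V ** p - cplx (U ** V)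
      = cplx U ** (matrix_inv W - mat 1) ** cplx V ** p + cplx (U ** V) ** (p - mat 1)"
    by (simp add: cplx_mult[symmetric] matrix_diff_ldistrib matrix_diff_rdistrib matrix_mul_assoc)
  moreover have "norm (cplx U ** (matrix_inv W - mat 1) ** cplx V ** p)
      \<le> r\<^sup>2 * (2 * r * norm (W - mat 1)) * norm p"
  proof -
    have "norm (cplx U ** (matrix_inv W - mat 1) ** cplx V) \<le> r\<^sup>2 * (2 * r * norm (W - mat 1))"
      using norm_cplx_orthogonal_sandwich_le[OF U V, of "matrix_inv W - mat 1"]
        norm_matrix_inv_sub_1_le[OF W]
      by (simp add: r_def) (meson mult_left_mono of_nat_0_le_iff order_trans)
    then show ?thesis
      by (meson mult_right_mono norm_ge_zero norm_matrix_mult_le order_trans)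
  qed
  moreover have "norm (cplx (U ** V) ** (p - mat 1)) \<le> r * norm (p - mat 1)"
    using norm_matrix_mult_le[of "cplx (U ** V)" "p - mat 1"] orthogonal_matrix_mul[OF U V]
    by (simp add: norm_cplx_orthogonal r_def)
  ultimately show ?thesis
    using norm_triangle_ineq[of "cplx U ** (matrix_inv W - mat 1) ** cplx V ** p"
        "cplx (U ** V) ** (p - mat 1)"]
    by (simp add: r_def power2_eq_square power3_eq_cube mult_ac)
qed

lemma E_setE:
  fixes h :: "'n::finite cmat"
  assumes "h \<in> E_set \<delta>"
  obtains g p where "h = cplx g ** p" "det g > 0" "norm (p - mat 1) \<le> sqrt CARD('n) * \<delta>"
proof -
  obtain g p where "h = cplx g ** p" "det g > 0" "opnorm (p - mat 1) < \<delta>"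
    using assms by (auto simp: E_set_def)
  moreover have "norm (p - mat 1) \<le> sqrt CARD('n) * \<delta>"
    using norm_le_sqrt_card_opnorm[of "p - mat 1"] \<open>opnorm (p - mat 1) < \<delta>\<close>
    by (meson less_imp_le mult_left_mono order_trans real_sqrt_ge_zero of_nat_0_le_iff)
  ultimately show ?thesis
    using that by blast
qed

lemma E_set_eigenvalue_Re_pos:
  fixes h :: "'n::finite cmat"
  assumes "h \<in> E_set \<delta>" and "3 * sqrt CARD('n) * \<delta> < 1"
    and "cmat_eigenvalue (h ** transpose h) c"
  shows "Re c > 0"
proof -
  obtain g p where h: "h = cplx g ** p" and "det g > 0" and e: "norm (p - mat 1) \<le> sqrt CARD('n) * \<delta>"
    using assms(1) by (rule E_setE)
  have "norm (p ** transpose p - mat 1) < 1"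
    using norm_mult_transpose_sub_1_le[of p] e assms(2) by linarith
  moreover have "h ** transpose h = cplx g ** (p ** transpose p) ** cplx (transpose g)"
    by (simp add: h matrix_transpose_mul transpose_cplx matrix_mul_assoc)
  moreover have "invertible g"
    using \<open>det g > 0\<close> by (simp add: invertible_det_nz)
  ultimately show ?thesis
    using assms(3) cmat_eigenvalue_congruence_Re_pos by metis
qed

lemma psi_polar_factorization:
  fixes g :: "real^'n^'n" and p :: "'n::finite cmat"
  assumes "det g > 0" and small: "24 * CARD('n) * norm (p - mat 1) \<le> 1"
  obtains U V W where "orthogonal_matrix U" "orthogonal_matrix V" "rotation_matrix (U ** V)"
    "psi (cplx g ** p) = cplx U ** matrix_inv W ** cplx V ** p"
    "norm (W - mat 1) \<le> 6 * CARD('n) * norm (p - mat 1)" "norm (W - mat 1) \<le> 1/4"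
proof -
  have "norm (p - mat 1) \<le> CARD('n) * norm (p - mat 1)"
    by (simp add: mult_le_cancel_right1)
  then have e: "norm (p - mat 1) \<le> 1"
    using small by linarith
  have "invertible g"
    using \<open>det g > 0\<close> by (simp add: invertible_det_nz)
  then obtain U s V where U: "orthogonal_matrix U" and V: "orthogonal_matrix V"
    and s: "\<And>j. s j > 0" and g: "g = U ** diag_mat s ** V"
    using invertible_matrix_svd by blast
  define E where "E = cplx V ** (p ** transpose p - mat 1) ** cplx (transpose V)"
  have "norm E \<le> CARD('n) * (3 * norm (p - mat 1))"
    using norm_cplx_orthogonal_sandwich_le[OF V, of "transpose V"] V
      norm_mult_transpose_sub_1_le[OF e]
    by (simp add: E_def) (meson mult_left_mono of_nat_0_le_iff order_trans)
  then have E_small: "norm E \<le> 3 * CARD('n) * norm (p - mat 1)" "norm E \<le> 1/8"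
    using small by (simp_all add: mult_ac)
  have "transpose E = E"
    by (simp add: E_def transpose_diff matrix_transpose_mul transpose_cplx matrix_mul_assoc)
  then obtain W where W_sym: "transpose (cplx (diag_mat s) ** W) = cplx (diag_mat s) ** W"
    and WW: "W ** transpose W = mat 1 + E" and W: "norm (W - mat 1) \<le> 2 * norm E"
    by (rule near_identity_symmetrizing_factor[OF s _ E_small(2)])
  have "mat 1 + E = cplx V ** (p ** transpose p) ** cplx (transpose V)"
    using cplx_orthogonal_inverse(1)[OF V]
    by (simp add: E_def matrix_diff_ldistrib matrix_diff_rdistrib)
  moreover have "norm (W - mat 1) < 1"
    using W E_small(2) by linarith
  ultimately have "psi (cplx g ** p) = cplx U ** matrix_inv W ** cplx V ** p"
    unfolding g by (intro psi_svd_formula[OF U V s W_sym]) (simp_all add: WW)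
  moreover have "rotation_matrix (U ** V)"
    using rotation_matrix_svd[OF U V s] g \<open>det g > 0\<close> by simp
  moreover have "norm (W - mat 1) \<le> 6 * CARD('n) * norm (p - mat 1)" "norm (W - mat 1) \<le> 1/4"
    using W E_small by linarith+
  ultimately show ?thesis
    using that[OF U V] by simp
qed

lemma psi_near_rotation:
  fixes g :: "real^'n^'n" and p :: "'n::finite cmat"
  assumes "det g > 0" and small: "24 * CARD('n) * norm (p - mat 1) \<le> 1"
  shows "\<exists>Q\<in>SO_set. opnorm (psi (cplx g ** p) - cplx Q)
    \<le> 25 * sqrt CARD('n) ^ 6 * norm (p - mat 1)"
proof -
  define r where "r = sqrt CARD('n)"
  define e where "e = norm (p - mat 1)"
  obtain U V W where U: "orthogonal_matrix U" and V: "orthogonal_matrix V"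
    and Q: "rotation_matrix (U ** V)" and psi: "psi (cplx g ** p) = cplx U ** matrix_inv W ** cplx V ** p"
    and W: "norm (W - mat 1) \<le> 6 * r\<^sup>2 * e" "norm (W - mat 1) \<le> 1/4"
    using psi_polar_factorization[OF assms] unfolding r_def e_def by auto
  have r: "r \<ge> 1"
    by (simp add: r_def)
  have "e \<le> CARD('n) * e"
    by (simp add: e_def mult_le_cancel_right1)
  then have "e \<le> r"
    using small r by (simp add: e_def)
  then have norm_p: "norm p \<le> 2 * r"
    using norm_triangle_ineq[of "p - mat 1" "mat 1"] by (simp add: e_def norm_mat_1 r_def)
  have "opnorm (psi (cplx g ** p) - cplx (U ** V)) \<le> 2 * r ^ 3 * norm (W - mat 1) * norm p + r * e"
    using W(2) unfolding psi r_def e_def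
    by (intro order_trans[OF opnorm_le_norm norm_polar_factor_sub_rotation_le[OF U V]]) simp
  also have "\<dots> \<le> 2 * r ^ 3 * (6 * r\<^sup>2 * e) * (2 * r) + r * e"
    using W(1) norm_p r by (intro add_mono mult_mono) (simp_all add: e_def)
  also have "\<dots> \<le> 25 * r ^ 6 * e"
  proof -
    have "r \<le> r ^ 6"
      using r by (simp add: power_increasing[of 1 6 r, simplified])
    then show ?thesis
      using mult_right_mono[of r "r ^ 6" e] by (simp add: e_def eval_nat_numeral mult_ac)
  qed
  finally show ?thesis
    using Q by (auto simp: SO_set_iff_rotation_matrix r_def e_def)
qed

lemma E_set_psi_near_SO:
  fixes h :: "'n::finite cmat"
  assumes h: "h \<in> E_set \<delta>" and small: "24 * sqrt CARD('n) ^ 3 * \<delta> \<le> 1"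
  shows "\<exists>Q\<in>SO_set. opnorm (psi h - cplx Q) \<le> 25 * sqrt CARD('n) ^ 7 * \<delta>"
proof -
  define r where "r = sqrt CARD('n)"
  obtain g p where h: "h = cplx g ** p" and "det g > 0" and e: "norm (p - mat 1) \<le> r * \<delta>"
    using h unfolding r_def by (rule E_setE)
  have r: "r \<ge> 1" "r\<^sup>2 = CARD('n)"
    by (simp_all add: r_def)
  then have "CARD('n) * norm (p - mat 1) \<le> r ^ 3 * \<delta>"
    using mult_left_mono[OF e, of "r\<^sup>2"] by (simp add: eval_nat_numeral mult_ac)
  then have "24 * CARD('n) * norm (p - mat 1) \<le> 1"
    using small by (simp add: r_def)
  then obtain Q where "Q \<in> SO_set" "opnorm (psi h - cplx Q) \<le> 25 * r ^ 6 * norm (p - mat 1)"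
    using psi_near_rotation[OF \<open>det g > 0\<close>] by (auto simp: h r_def)
  moreover have "25 * r ^ 6 * norm (p - mat 1) \<le> 25 * r ^ 7 * \<delta>"
    using mult_left_mono[OF e, of "25 * r ^ 6"] r(1) by (simp add: eval_nat_numeral mult_ac)
  ultimately show ?thesis
    unfolding r_def by (meson order_trans)
qed

theorem proposition8p2:
  shows "\<exists>C>0. \<exists>\<delta>0>0. \<forall>\<delta>. 0 < \<delta> \<and> \<delta> < \<delta>0 \<longrightarrow>
     (\<forall>h \<in> (E_set \<delta> :: 'n::finite cmat set).
        (\<forall>c. cmat_eigenvalue (h ** transpose h) c \<longrightarrow> Re c > 0) \<and>
        (\<exists>Q \<in> SO_set. opnorm (psi h - cplx Q) \<le> C * \<delta>))"
proof (intro exI conjI allI impI ballI)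
  define r where "r = sqrt CARD('n)"
  have r: "r \<ge> 1"
    by (simp add: r_def)
  show "25 * r ^ 7 > 0" "1 / (24 * r ^ 3) > 0"
    using r by simp_all
  fix \<delta> :: real and h :: "'n cmat" and c
  assume \<delta>: "0 < \<delta> \<and> \<delta> < 1 / (24 * r ^ 3)" and h: "h \<in> E_set \<delta>"
  then have small: "24 * r ^ 3 * \<delta> \<le> 1"
    using r by (simp add: field_simps)
  moreover have "r * \<delta> \<le> r ^ 3 * \<delta>"
    using r \<delta> by (intro mult_right_mono) (simp_all add: power_increasing[of 1 3 r, simplified])
  ultimately show "cmat_eigenvalue (h ** transpose h) c \<Longrightarrow> Re c > 0"
    using E_set_eigenvalue_Re_pos[OF h] by (simp add: r_def)
  show "\<exists>Q \<in> SO_set. opnorm (psi h - cplx Q) \<le> 25 * r ^ 7 * \<delta>"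
    using E_set_psi_near_SO[OF h] small by (simp add: r_def)
qed

end
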